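(* Let $d\ge2$, $n\ge1$, $\gamma$ a positive conductivity on the lattice graph below, and $d-1\le t\le dn-1$. For each node $p\in D\cup\partial D$ define $\mathbf v_p\in\mathbb R^{D\cup\partial D}$ by $(\mathbf v_p)_q=\gamma_{pq}$ if $q\in\mathcal N(p)$, $(\mathbf v_p)_p=-\sum_{r\in\mathcal N(p)}\gamma_{pr}$, and $(\mathbf v_p)_q=0$ otherwise. Then there is an orthogonal direct sum decomposition (with respect to the standard inner product) $$\mathcal U^{(t)}\oplus\operatorname{span}\{\mathbf v_p|_{L_t^{\mathcal S}\cup J_t^{\mathcal S}}:p\in L_{t+1}^{\mathcal S}\}=\mathbb R^{L_t^{\mathcal S}\cup J_t^{\mathcal S}}.$$
   Context: Lattice: $D=\{x\in\mathbb Z^d:1\le x_i\le n\ \forall i\}$, $\partial D=\{p\in\mathbb Z^d:\min_{q\in D}\|q-p\|_{\ell^1}=1\}$; $E$ = unordered pairs $pq\subseteq D\cup\partial D$ with $\|p-q\|_{\ell^1}=1$, not both in $\partial D$; $\mathcal N(p)=\{q:pq\in E\}$. Conductivity $\gamma:E\to(0,\infty)$, symmetric. $S_\gamma\varphi$ is the unique $\mathbf u\in\mathbb R^{D\cup\partial D}$ with $\sum_{q\in\mathcal N(p)}\gamma_{pq}(\mathbf u_q-\mathbf u_p)=0$ for all $p\in D$ and $\mathbf u=\varphi$ on $\partial D$. Functions on subsets are extended by zero. With $s(x)=\sum_ix_i$: $L_t=\{x\in D:s(x)=t\}$, $L_t^{\mathcal S}=\{x\in D:s(x)\le t\}$, $K_t^+=\{x\in\partial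 D:s(x)=t,\max_ix_i=n+1\}$, $K_t^-=\{x\in\partial D:s(x)=t,\min_ix_i=0\}$, $K_t^{\mathcal S\pm}=\bigcup_{\ell\le t}K_\ell^\pm$, $J_t^{\mathcal S}=K_t^{\mathcal S-}\cup K_{t+1}^{\mathcal S+}$. $T_1^{(t)}:\mathbb R^{J_t^{\mathcal S}}\to\mathbb R^{L_{t+1}}$, $\varphi\mapsto(S_\gamma\varphi)|_{L_{t+1}}$. $\mathcal U^{(t)}=\{(S_\gamma\varphi)|_{J_t^{\mathcal S}\cup L_t^{\mathcal S}}:\varphi\in\ker T_1^{(t)}\}\subseteq\mathbb R^{J_t^{\mathcal S}\cup L_t^{\mathcal S}}$. *)

theory Defs
  imports "HOL-Analysis.Analysis"
begin

text \<open>Lattice points of Z^d are represented as functions nat => int that vanish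
  at all indices >= d (coordinates are indexed 0..d-1).\<close>
type_synonym pt = "nat \<Rightarrow> int"

definition l1dist :: "nat \<Rightarrow> pt \<Rightarrow> pt \<Rightarrow> int" where
  "l1dist d p q = (\<Sum>i<d. \<bar>p i - q i\<bar>)"

definition Dom :: "nat \<Rightarrow> nat \<Rightarrow> pt set" where
  "Dom d n = {x. (\<forall>i<d. 1 \<le> x i \<and> x i \<le> int n) \<and> (\<forall>i\<ge>d. x i = 0)}"

definition Bdry :: "nat \<Rightarrow> nat \<Rightarrow> pt set" where
  "Bdry d n = {p. (\<forall>i\<ge>d. p i = 0) \<and>
      (\<exists>q\<in>Dom d n. l1dist d q p = 1) \<and> (\<forall>q\<in>Dom d n. 1 \<le> l1dist d q p)}"

definition Nodes :: "nat \<Rightarrow> nat \<Rightarrow> pt set" where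
  "Nodes d n = Dom d n \<union> Bdry d n"

definition is_edge :: "nat \<Rightarrow> nat \<Rightarrow> pt \<Rightarrow> pt \<Rightarrow> bool" where
  "is_edge d n p q \<longleftrightarrow> p \<in> Nodes d n \<and> q \<in> Nodes d n \<and> l1dist d p q = 1
      \<and> \<not> (p \<in> Bdry d n \<and> q \<in> Bdry d n)"

definition Nbr :: "nat \<Rightarrow> nat \<Rightarrow> pt \<Rightarrow> pt set" where
  "Nbr d n p = {q. is_edge d n p q}"

definition conductivity :: "nat \<Rightarrow> nat \<Rightarrow> (pt \<Rightarrow> pt \<Rightarrow> real) \<Rightarrow> bool" where
  "conductivity d n \<gamma> \<longleftrightarrow> (\<forall>p q. is_edge d n p q \<longrightarrow> \<gamma> p q > 0 \<and> \<gamma> p q = \<gamma> q p)"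

text \<open>Functions on subsets of the node set are extended by zero.\<close>
definition restr :: "pt set \<Rightarrow> (pt \<Rightarrow> real) \<Rightarrow> pt \<Rightarrow> real" where
  "restr A u = (\<lambda>p. if p \<in> A then u p else 0)"

definition Sgam :: "nat \<Rightarrow> nat \<Rightarrow> (pt \<Rightarrow> pt \<Rightarrow> real) \<Rightarrow> (pt \<Rightarrow> real) \<Rightarrow> pt \<Rightarrow> real" where
  "Sgam d n \<gamma> \<phi> = (THE u. (\<forall>p\<in>Dom d n. (\<Sum>q\<in>Nbr d n p. \<gamma> p q * (u q - u p)) = 0)
       \<and> (\<forall>p\<in>Bdry d n. u p = \<phi> p) \<and> (\<forall>p. p \<notin> Nodes d n \<longrightarrow> u p = 0))"

definition ssum :: "nat \<Rightarrow> pt \<Rightarrow> int" where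
  "ssum d x = (\<Sum>i<d. x i)"

definition Lt :: "nat \<Rightarrow> nat \<Rightarrow> int \<Rightarrow> pt set" where
  "Lt d n t = {x\<in>Dom d n. ssum d x = t}"

definition LSt :: "nat \<Rightarrow> nat \<Rightarrow> int \<Rightarrow> pt set" where
  "LSt d n t = {x\<in>Dom d n. ssum d x \<le> t}"

definition Kplus :: "nat \<Rightarrow> nat \<Rightarrow> int \<Rightarrow> pt set" where
  "Kplus d n t = {x\<in>Bdry d n. ssum d x = t \<and> Max (x ` {..<d}) = int n + 1}"

definition Kminus :: "nat \<Rightarrow> nat \<Rightarrow> int \<Rightarrow> pt set" where
  "Kminus d n t = {x\<in>Bdry d n. ssum d x = t \<and> Min (x ` {..<d}) = 0}"

definition KSplus :: "nat \<Rightarrow> nat \<Rightarrow> int \<Rightarrow> pt set" where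
  "KSplus d n t = (\<Union>l\<in>{..t}. Kplus d n l)"

definition KSminus :: "nat \<Rightarrow> nat \<Rightarrow> int \<Rightarrow> pt set" where
  "KSminus d n t = (\<Union>l\<in>{..t}. Kminus d n l)"

definition JSt :: "nat \<Rightarrow> nat \<Rightarrow> int \<Rightarrow> pt set" where
  "JSt d n t = KSminus d n t \<union> KSplus d n (t + 1)"

text \<open>Kernel of T_1^{(t)}: phi in R^{J_t^S} (extended by zero) with
  (S_gamma phi) restricted to L_{t+1} equal to 0.\<close>
definition kerT1 :: "nat \<Rightarrow> nat \<Rightarrow> (pt \<Rightarrow> pt \<Rightarrow> real) \<Rightarrow> int \<Rightarrow> (pt \<Rightarrow> real) set" where
  "kerT1 d n \<gamma> t = {\<phi>. (\<forall>p. p \<notin> JSt d n t \<longrightarrow> \<phi> p = 0)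
       \<and> (\<forall>p\<in>Lt d n (t + 1). Sgam d n \<gamma> \<phi> p = 0)}"

definition Ut :: "nat \<Rightarrow> nat \<Rightarrow> (pt \<Rightarrow> pt \<Rightarrow> real) \<Rightarrow> int \<Rightarrow> (pt \<Rightarrow> real) set" where
  "Ut d n \<gamma> t = (\<lambda>\<phi>. restr (JSt d n t \<union> LSt d n t) (Sgam d n \<gamma> \<phi>)) ` kerT1 d n \<gamma> t"

definition vvec :: "nat \<Rightarrow> nat \<Rightarrow> (pt \<Rightarrow> pt \<Rightarrow> real) \<Rightarrow> pt \<Rightarrow> pt \<Rightarrow> real" where
  "vvec d n \<gamma> p = (\<lambda>q. if q \<in> Nbr d n p then \<gamma> p q
      else if q = p then - (\<Sum>r\<in>Nbr d n p. \<gamma> p r) else 0)"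

definition fspan :: "'i set \<Rightarrow> ('i \<Rightarrow> pt \<Rightarrow> real) \<Rightarrow> (pt \<Rightarrow> real) set" where
  "fspan I f = {w. \<exists>c. w = (\<lambda>q. \<Sum>i\<in>I. c i * f i q)}"

definition ip :: "pt set \<Rightarrow> (pt \<Rightarrow> real) \<Rightarrow> (pt \<Rightarrow> real) \<Rightarrow> real" where
  "ip A u w = (\<Sum>q\<in>A. u q * w q)"

end

theory Submission
  imports Defs
begin

text \<open>An element of U(t) is a harmonic function u (for the conductivity \<gamma>) whose boundary
  values live on J(t) and which vanishes on the level L(t+1). By the maximum principle, u then
  vanishes at all interior nodes of coordinate sum above t + 1, so u is supported on
  A = LS(t) \<union> J(t), and the inner product of u with v(p) is the Laplacian of u at p. Hence U(t)
  lies in the orthogonal complement in \<real>^A of the vectors v(p), p \<in> LS(t+1). Conversely, a vector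
  on A orthogonal to them, extended by zero, is harmonic at every interior node (nodes above level
  t + 1 have no neighbour in A), so it solves the Dirichlet problem for its own boundary values and
  lies in U(t). The direct sum is then the splitting of \<real>^A into a finite span and its
  orthogonal complement.\<close>

lemma finite_int_box:
  "finite {x::pt. (\<forall>i<d. a \<le> x i \<and> x i \<le> b) \<and> (\<forall>i\<ge>d. x i = 0)}" (is "finite ?B")
proof -
  have "?B \<subseteq> (\<lambda>f i. if i < d then f i else 0) ` PiE {..<d} (\<lambda>_. {a..b})"
  proof
    fix x assume x: "x \<in> ?B"
    then have "x = (\<lambda>i. if i < d then restrict x {..<d} i else 0)"
      by (auto simp: fun_eq_iff)
    moreover have "restrict x {..<d} \<in> PiE {..<d} (\<lambda>_. {a..b})" using x by auto
    ultimately show "x \<in> (\<lambda>f i. if i < d then f i else 0) ` PiE {..<d} (\<lambda>_. {a..b})" by blast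
  qed
  then show ?thesis by (rule finite_subset) (simp add: finite_PiE)
qed

lemma l1dist_commute: "l1dist d p q = l1dist d q p"
  unfolding l1dist_def by (simp add: abs_minus_commute)

lemma l1dist_self [simp]: "l1dist d p p = 0"
  unfolding l1dist_def by simp

lemma abs_coord_le_l1dist: "i < d \<Longrightarrow> \<bar>p i - q i\<bar> \<le> l1dist d p q"
  unfolding l1dist_def by (rule member_le_sum) auto

lemma l1dist_eq_1D:
  assumes "l1dist d p q = 1"
  obtains i where "i < d" "\<bar>q i - p i\<bar> = 1" "\<forall>j<d. j \<noteq> i \<longrightarrow> q j = p j"
proof -
  have "\<exists>i<d. p i \<noteq> q i"
  proof (rule ccontr)
    assume "\<not> ?thesis"
    then have "l1dist d p q = 0" unfolding l1dist_def by simp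
    with assms show False by simp
  qed
  then obtain i where i: "i < d" "p i \<noteq> q i" by blast
  have split: "l1dist d p q = \<bar>p i - q i\<bar> + (\<Sum>j\<in>{..<d}-{i}. \<bar>p j - q j\<bar>)"
    unfolding l1dist_def using i by (simp add: sum.remove)
  have "(\<Sum>j\<in>{..<d}-{i}. \<bar>p j - q j\<bar>) \<ge> 0" "\<bar>p i - q i\<bar> \<ge> 1"
    using i by (auto simp: sum_nonneg)
  then have "\<bar>p i - q i\<bar> = 1" "(\<Sum>j\<in>{..<d}-{i}. \<bar>p j - q j\<bar>) = 0"
    using split assms by linarith+
  then show ?thesis
    using i by (intro that[of i]) (auto simp: abs_minus_commute sum_nonneg_eq_0_iff)
qed

lemma ssum_eq_if_other_coords_eq:
  assumes "i < d" "\<forall>j<d. j \<noteq> i \<longrightarrow> q j = p j"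
  shows "ssum d q = ssum d p + (q i - p i)"
proof -
  have "ssum d q - ssum d p = (\<Sum>j<d. if j = i then q i - p i else 0)"
    unfolding ssum_def sum_subtractf[symmetric] using assms by (intro sum.cong) auto
  then show ?thesis using assms(1) by simp
qed

lemma Dom_Bdry_disjoint: "Dom d n \<inter> Bdry d n = {}"
  unfolding Bdry_def by fastforce

lemma Bdry_subset_box:
  "Bdry d n \<subseteq> {x::pt. (\<forall>i<d. 0 \<le> x i \<and> x i \<le> int n + 1) \<and> (\<forall>i\<ge>d. x i = 0)}"
proof
  fix p assume p: "p \<in> Bdry d n"
  then obtain q where q: "q \<in> Dom d n" "l1dist d q p = 1" unfolding Bdry_def by auto
  then have "\<forall>i<d. \<bar>q i - p i\<bar> \<le> 1"
    using abs_coord_le_l1dist[of _ d q p] by fastforce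
  then show "p \<in> {x::pt. (\<forall>i<d. 0 \<le> x i \<and> x i \<le> int n + 1) \<and> (\<forall>i\<ge>d. x i = 0)}"
    using p q(1) unfolding Bdry_def Dom_def by (force simp: abs_le_iff)
qed

lemma finite_Nodes: "finite (Nodes d n)"
proof -
  have "finite (Dom d n)"
    unfolding Dom_def by (rule finite_subset[OF _ finite_int_box[of d 1 "int n"]]) auto
  moreover have "finite (Bdry d n)" by (rule finite_subset[OF Bdry_subset_box finite_int_box])
  ultimately show ?thesis unfolding Nodes_def by simp
qed

lemma Nbr_subset_Nodes: "Nbr d n p \<subseteq> Nodes d n"
  unfolding Nbr_def is_edge_def by auto

lemma finite_Nbr: "finite (Nbr d n p)"
  using finite_subset[OF Nbr_subset_Nodes finite_Nodes] .

lemma Nbr_l1dist: "q \<in> Nbr d n p \<Longrightarrow> l1dist d p q = 1"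
  unfolding Nbr_def is_edge_def by auto

lemma Nbr_irrefl: "p \<notin> Nbr d n p"
  using Nbr_l1dist by fastforce

lemma Nbr_sym: "q \<in> Nbr d n p \<longleftrightarrow> p \<in> Nbr d n q"
  unfolding Nbr_def is_edge_def by (auto simp: l1dist_commute)

lemma ssum_Nbr:
  assumes "q \<in> Nbr d n p"
  shows "ssum d q = ssum d p + 1 \<or> ssum d q = ssum d p - 1"
proof -
  obtain i where i: "i < d" "\<bar>q i - p i\<bar> = 1" "\<forall>j<d. j \<noteq> i \<longrightarrow> q j = p j"
    using l1dist_eq_1D[OF Nbr_l1dist[OF assms]] by blast
  then show ?thesis
    using ssum_eq_if_other_coords_eq[OF i(1) i(3)] by (auto simp: abs_if split: if_splits)
qed

lemma lower_Nbr_in_Dom: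
  assumes "d \<ge> 1" "x \<in> Dom d n"
  shows "x(0 := x 0 - 1) \<in> Nbr d n x" "ssum d (x(0 := x 0 - 1)) = ssum d x - 1"
proof -
  let ?y = "x(0 := x 0 - 1)"
  have dist: "l1dist d x ?y = 1"
  proof -
    have "l1dist d x ?y = (\<Sum>j<d. if j = 0 then 1 else 0)"
      unfolding l1dist_def by (intro sum.cong) auto
    then show ?thesis using assms by simp
  qed
  have "?y \<in> Dom d n \<or> ?y \<in> Bdry d n"
  proof (cases "x 0 = 1")
    case x0: True
    have "1 \<le> l1dist d q ?y" if "q \<in> Dom d n" for q
      using abs_coord_le_l1dist[of 0 d q ?y] that x0 assms unfolding Dom_def by auto
    then have "?y \<in> Bdry d n"
      using assms dist unfolding Bdry_def Dom_def by auto
    then show ?thesis ..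
  next
    case False
    then show ?thesis using assms unfolding Dom_def by auto
  qed
  then show "?y \<in> Nbr d n x"
    using assms dist Dom_Bdry_disjoint unfolding Nbr_def is_edge_def Nodes_def by blast
  show "ssum d ?y = ssum d x - 1"
    using ssum_eq_if_other_coords_eq[of 0 d ?y x] assms by auto
qed

lemma ssum_Dom_Nbr_Kplus:
  assumes "d \<ge> 1" "q \<in> Kplus d n l" "p \<in> Dom d n" "q \<in> Nbr d n p"
  shows "ssum d p = l - 1"
proof -
  have "0 \<in> {..<d}" using assms(1) by simp
  then have "Max (q ` {..<d}) \<in> q ` {..<d}" by (intro Max_in) auto
  then obtain j where j: "j < d" "q j = int n + 1" using assms(2) unfolding Kplus_def by auto
  obtain i where i: "i < d" "\<bar>q i - p i\<bar> = 1" "\<forall>k<d. k \<noteq> i \<longrightarrow> q k = p k"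
    using l1dist_eq_1D[OF Nbr_l1dist[OF assms(4)]] by blast
  have "p j \<le> int n" using assms(3) j unfolding Dom_def by auto
  then have "j = i" "q i - p i = 1" using i j by force+
  then show ?thesis
    using ssum_eq_if_other_coords_eq[OF i(1) i(3)] assms(2) unfolding Kplus_def by simp
qed

lemma ip_diff_mult_left: "ip A (\<lambda>q. u q - x * v q) w = ip A u w - x * ip A v w"
  unfolding ip_def by (simp add: algebra_simps sum_subtractf sum_distrib_left)

lemma ip_sum_right: "ip A u (\<lambda>q. \<Sum>i\<in>I. c i * v i q) = (\<Sum>i\<in>I. c i * ip A u (v i))"
  unfolding ip_def by (simp add: sum_distrib_left sum.swap[of _ A I] algebra_simps)

lemma ip_self_eq_0_iff: "finite A \<Longrightarrow> ip A u u = 0 \<longleftrightarrow> (\<forall>q\<in>A. u q = 0)"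
  unfolding ip_def by (simp add: sum_nonneg_eq_0_iff)

lemma ip_orthogonal_residual_exists:
  assumes "finite A" "finite I"
  shows "\<exists>c. \<forall>j\<in>I. ip A (\<lambda>q. f q - (\<Sum>i\<in>I. c i * v i q)) (v j) = 0"
  using assms(2)
proof (induction I arbitrary: f rule: finite_induct)
  case empty
  then show ?case by simp
next
  case (insert k I)
  obtain c1 where c1: "\<forall>j\<in>I. ip A (\<lambda>q. f q - (\<Sum>i\<in>I. c1 i * v i q)) (v j) = 0"
    using insert.IH by blast
  obtain c2 where c2: "\<forall>j\<in>I. ip A (\<lambda>q. v k q - (\<Sum>i\<in>I. c2 i * v i q)) (v j) = 0"
    using insert.IH by blast
  define r1 where "r1 = (\<lambda>q. f q - (\<Sum>i\<in>I. c1 i * v i q))"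
  define r2 where "r2 = (\<lambda>q. v k q - (\<Sum>i\<in>I. c2 i * v i q))"
  define \<alpha> where "\<alpha> = ip A r1 r2 / ip A r2 r2"
  define r where "r = (\<lambda>q. r1 q - \<alpha> * r2 q)"
  have orth_I: "\<forall>j\<in>I. ip A r (v j) = 0"
    using c1 c2 unfolding r_def r1_def r2_def ip_diff_mult_left by simp
  have "ip A r r2 = 0"
  proof (cases "ip A r2 r2 = 0")
    case True
    then have "\<forall>q\<in>A. r2 q = 0" using ip_self_eq_0_iff[OF assms(1)] by blast
    then show ?thesis unfolding ip_def by simp
  next
    case False
    then show ?thesis unfolding r_def ip_diff_mult_left \<alpha>_def by simp
  qed
  moreover have "ip A r r2 = ip A r (v k) - (\<Sum>i\<in>I. c2 i * ip A r (v i))"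
    using ip_sum_right[where u=r and c=c2] unfolding r2_def ip_def
    by (simp add: right_diff_distrib sum_subtractf)
  ultimately have orth_k: "ip A r (v k) = 0" using orth_I by simp
  have "r = (\<lambda>q. f q - (\<Sum>i\<in>insert k I. ((\<lambda>i. c1 i - \<alpha> * c2 i)(k := \<alpha>)) i * v i q))"
  proof
    fix q
    have "(\<Sum>i\<in>I. ((\<lambda>i. c1 i - \<alpha> * c2 i)(k := \<alpha>)) i * v i q)
        = (\<Sum>i\<in>I. (c1 i - \<alpha> * c2 i) * v i q)"
      using insert.hyps by (intro sum.cong) auto
    then show "r q = f q - (\<Sum>i\<in>insert k I. ((\<lambda>i. c1 i - \<alpha> * c2 i)(k := \<alpha>)) i * v i q)"
      unfolding r_def r1_def r2_def using insert.hyps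
      by (simp add: algebra_simps sum_subtractf sum_distrib_left)
  qed
  then show ?case using orth_I orth_k by blast
qed

lemma orthogonal_complement_direct_sum:
  assumes "finite A" "finite I" and supp: "\<forall>i\<in>I. \<forall>p. p \<notin> A \<longrightarrow> v i p = 0"
  defines "U \<equiv> {f. (\<forall>p. p \<notin> A \<longrightarrow> f p = 0) \<and> (\<forall>i\<in>I. ip A f (v i) = 0)}"
  shows "(\<forall>u\<in>U. \<forall>w\<in>fspan I v. ip A u w = 0)
    \<and> U \<inter> fspan I v = {\<lambda>_. 0}
    \<and> {(\<lambda>q. u q + w q) | u w. u \<in> U \<and> w \<in> fspan I v} = {f. \<forall>p. p \<notin> A \<longrightarrow> f p = 0}"
proof (intro conjI)
  show orth: "\<forall>u\<in>U. \<forall>w\<in>fspan I v. ip A u w = 0"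
    unfolding U_def fspan_def by (auto simp: ip_sum_right)
  have W_supp: "\<forall>w\<in>fspan I v. \<forall>p. p \<notin> A \<longrightarrow> w p = 0"
    using supp unfolding fspan_def by auto
  show "U \<inter> fspan I v = {\<lambda>_. 0}"
  proof
    show "U \<inter> fspan I v \<subseteq> {\<lambda>_. 0}"
      using orth W_supp ip_self_eq_0_iff[OF assms(1)] by (fastforce simp: fun_eq_iff)
    have "(\<lambda>_. 0) \<in> fspan I v" unfolding fspan_def by (auto intro!: exI[of _ "\<lambda>_. 0"])
    then show "{\<lambda>_. 0} \<subseteq> U \<inter> fspan I v" unfolding U_def ip_def by simp
  qed
  show "{(\<lambda>q. u q + w q) | u w. u \<in> U \<and> w \<in> fspan I v} = {f. \<forall>p. p \<notin> A \<longrightarrow> f p = 0}"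
  proof
    show "{(\<lambda>q. u q + w q) | u w. u \<in> U \<and> w \<in> fspan I v} \<subseteq> {f. \<forall>p. p \<notin> A \<longrightarrow> f p = 0}"
      using W_supp unfolding U_def by auto
    show "{f. \<forall>p. p \<notin> A \<longrightarrow> f p = 0} \<subseteq> {(\<lambda>q. u q + w q) | u w. u \<in> U \<and> w \<in> fspan I v}"
    proof
      fix f :: "pt \<Rightarrow> real" assume f: "f \<in> {f. \<forall>p. p \<notin> A \<longrightarrow> f p = 0}"
      obtain c where c: "\<forall>j\<in>I. ip A (\<lambda>q. f q - (\<Sum>i\<in>I. c i * v i q)) (v j) = 0"
        using ip_orthogonal_residual_exists[OF assms(1,2)] by blast
      define w where "w = (\<lambda>q. \<Sum>i\<in>I. c i * v i q)"
      have "w \<in> fspan I v" unfolding w_def fspan_def by blast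
      moreover have "(\<lambda>q. f q - w q) \<in> U"
        using c f W_supp \<open>w \<in> fspan I v\<close> unfolding U_def w_def by auto
      ultimately show "f \<in> {(\<lambda>q. u q + w q) | u w. u \<in> U \<and> w \<in> fspan I v}" by force
    qed
  qed
qed

lemma symmetric_injective_system_solvable:
  fixes M :: "pt \<Rightarrow> pt \<Rightarrow> real"
  assumes "finite I" and sym: "\<forall>i\<in>I. \<forall>j\<in>I. M i j = M j i"
    and inj: "\<And>x. \<forall>i\<in>I. (\<Sum>j\<in>I. M i j * x j) = 0 \<Longrightarrow> \<forall>i\<in>I. x i = 0"
  shows "\<exists>x. \<forall>i\<in>I. (\<Sum>j\<in>I. M i j * x j) = b i"
proof -
  obtain c where c: "\<forall>j\<in>I. ip I (\<lambda>q. b q - (\<Sum>i\<in>I. c i * M i q)) (M j) = 0"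
    using ip_orthogonal_residual_exists[OF assms(1) assms(1)] by blast
  have "\<forall>j\<in>I. (\<Sum>q\<in>I. M j q * (b q - (\<Sum>i\<in>I. c i * M i q))) = 0"
    using c unfolding ip_def by (simp add: mult.commute)
  then have "\<forall>q\<in>I. b q = (\<Sum>i\<in>I. c i * M i q)" using inj by fastforce
  then show ?thesis using sym by (intro exI[of _ c]) (auto simp: mult.commute intro!: sum.cong)
qed

definition laplacian :: "nat \<Rightarrow> nat \<Rightarrow> (pt \<Rightarrow> pt \<Rightarrow> real) \<Rightarrow> (pt \<Rightarrow> real) \<Rightarrow> pt \<Rightarrow> real" where
  "laplacian d n \<gamma> u p = (\<Sum>q\<in>Nbr d n p. \<gamma> p q * (u q - u p))"

definition dirichlet_solution ::
    "nat \<Rightarrow> nat \<Rightarrow> (pt \<Rightarrow> pt \<Rightarrow> real) \<Rightarrow> (pt \<Rightarrow> real) \<Rightarrow> (pt \<Rightarrow> real) \<Rightarrow> bool" where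
  "dirichlet_solution d n \<gamma> \<phi> u \<longleftrightarrow> (\<forall>p\<in>Dom d n. laplacian d n \<gamma> u p = 0)
     \<and> (\<forall>p\<in>Bdry d n. u p = \<phi> p) \<and> (\<forall>p. p \<notin> Nodes d n \<longrightarrow> u p = 0)"

lemma Sgam_eq_The_dirichlet_solution: "Sgam d n \<gamma> \<phi> = (THE u. dirichlet_solution d n \<gamma> \<phi> u)"
  unfolding Sgam_def dirichlet_solution_def laplacian_def ..

lemma laplacian_diff:
  "laplacian d n \<gamma> (\<lambda>q. u q - v q) p = laplacian d n \<gamma> u p - laplacian d n \<gamma> v p"
  unfolding laplacian_def by (simp add: sum_subtractf[symmetric] algebra_simps)

lemma laplacian_uminus: "laplacian d n \<gamma> (\<lambda>q. - u q) p = - laplacian d n \<gamma> u p"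
  unfolding laplacian_def by (simp add: sum_negf[symmetric] algebra_simps)

lemma sum_mult_restr:
  "finite B \<Longrightarrow> A \<subseteq> B \<Longrightarrow> (\<Sum>q\<in>B. f q * restr A u q) = (\<Sum>q\<in>A. f q * u q)"
  by (rule sum.mono_neutral_cong_right) (auto simp: restr_def)

lemma laplacian_eq_sum_vvec:
  assumes "p \<in> Nodes d n"
  shows "laplacian d n \<gamma> u p = (\<Sum>q\<in>Nodes d n. vvec d n \<gamma> p q * u q)"
proof -
  have "(\<Sum>q\<in>Nodes d n. vvec d n \<gamma> p q * u q)
      = (\<Sum>q\<in>Nodes d n. (if q \<in> Nbr d n p then \<gamma> p q * u q else 0)
          + (if q = p then - (\<Sum>r\<in>Nbr d n p. \<gamma> p r) * u p else 0))"
    unfolding vvec_def using Nbr_irrefl[of p d n] by (intro sum.cong) auto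
  also have "\<dots> = (\<Sum>q\<in>Nbr d n p. \<gamma> p q * u q) - (\<Sum>r\<in>Nbr d n p. \<gamma> p r) * u p"
    using assms Nbr_subset_Nodes[of d n p] finite_Nodes[of d n]
    by (simp add: sum.distrib sum.inter_restrict[symmetric] Int_absorb1)
  finally show ?thesis
    unfolding laplacian_def by (simp add: right_diff_distrib sum_subtractf sum_distrib_right)
qed

lemma vvec_sym: "conductivity d n \<gamma> \<Longrightarrow> vvec d n \<gamma> p q = vvec d n \<gamma> q p"
  unfolding vvec_def conductivity_def using Nbr_sym[of q d n p] by (auto simp: Nbr_def)

lemma conductivity_Nbr_pos: "conductivity d n \<gamma> \<Longrightarrow> q \<in> Nbr d n p \<Longrightarrow> \<gamma> p q > 0"
  unfolding conductivity_def Nbr_def by blast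

lemma laplacian_eq_0_local_max_imp_Nbr_eq:
  assumes "conductivity d n \<gamma>" "laplacian d n \<gamma> u x = 0" "\<forall>q\<in>Nbr d n x. u q \<le> u x"
  shows "\<forall>q\<in>Nbr d n x. u q = u x"
proof
  fix q assume q: "q \<in> Nbr d n x"
  have "(\<Sum>q\<in>Nbr d n x. \<gamma> x q * (u x - u q)) = - laplacian d n \<gamma> u x"
    unfolding laplacian_def by (simp add: sum_negf[symmetric] algebra_simps)
  then have "(\<Sum>q\<in>Nbr d n x. \<gamma> x q * (u x - u q)) = 0" using assms(2) by simp
  moreover have "\<gamma> x q * (u x - u q) \<ge> 0" if "q \<in> Nbr d n x" for q
    using that assms(3) conductivity_Nbr_pos[OF assms(1)] by (simp add: less_imp_le)
  ultimately have "\<gamma> x q * (u x - u q) = 0"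
    using q by (subst (asm) sum_nonneg_eq_0_iff[OF finite_Nbr]) auto
  then show "u q = u x" using conductivity_Nbr_pos[OF assms(1) q] by simp
qed

text \<open>Maximum principle: a positive maximiser of minimal coordinate sum would have its lower
  neighbour x(0 := x 0 - 1) as a maximiser of smaller coordinate sum.\<close>
lemma harmonic_nonpos:
  assumes "d \<ge> 1" "conductivity d n \<gamma>" "R \<subseteq> Dom d n"
    and harmonic: "\<forall>p\<in>R. laplacian d n \<gamma> u p = 0"
    and outside: "\<forall>p\<in>R. \<forall>q\<in>Nbr d n p. q \<notin> R \<longrightarrow> u q = 0"
  shows "\<forall>p\<in>R. u p \<le> 0"
proof (rule ccontr)
  assume "\<not> ?thesis"
  then obtain p0 where p0: "p0 \<in> R" "u p0 > 0" by force
  have "finite R" using assms(3) finite_Nodes finite_subset unfolding Nodes_def by blast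
  define M where "M = Max (u ` R)"
  have M_ge: "\<forall>p\<in>R. u p \<le> M" unfolding M_def using \<open>finite R\<close> by simp
  have "M \<in> u ` R" unfolding M_def using \<open>finite R\<close> p0 by (intro Max_in) auto
  have "M > 0" using M_ge p0 by force
  define S where "S = {p\<in>R. u p = M}"
  have "finite S" "S \<noteq> {}" unfolding S_def using \<open>finite R\<close> \<open>M \<in> u ` R\<close> by auto
  define x where "x = arg_min_on (ssum d) S"
  have "x \<in> S" and x_min: "\<forall>y\<in>S. ssum d x \<le> ssum d y"
    unfolding x_def using arg_min_if_finite[OF \<open>finite S\<close> \<open>S \<noteq> {}\<close>, of "ssum d"] by force+
  then have "x \<in> R" "u x = M" unfolding S_def by auto
  have "\<forall>q\<in>Nbr d n x. u q \<le> u x"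
    using M_ge outside \<open>x \<in> R\<close> \<open>u x = M\<close> \<open>M > 0\<close> by (metis less_imp_le)
  then have Nbr_max: "\<forall>q\<in>Nbr d n x. u q = M"
    using laplacian_eq_0_local_max_imp_Nbr_eq[OF assms(2)] harmonic \<open>x \<in> R\<close> \<open>u x = M\<close> by blast
  define y where "y = x(0 := x 0 - 1)"
  have "y \<in> Nbr d n x" "ssum d y = ssum d x - 1"
    using lower_Nbr_in_Dom[OF assms(1)] \<open>x \<in> R\<close> assms(3) unfolding y_def by auto
  moreover have "y \<in> S"
    using Nbr_max outside \<open>x \<in> R\<close> \<open>y \<in> Nbr d n x\<close> \<open>M > 0\<close> unfolding S_def by force
  ultimately show False using x_min by force
qed

lemma harmonic_vanishes:
  assumes "d \<ge> 1" "conductivity d n \<gamma>" "R \<subseteq> Dom d n"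
    and "\<forall>p\<in>R. laplacian d n \<gamma> u p = 0"
    and "\<forall>p\<in>R. \<forall>q\<in>Nbr d n p. q \<notin> R \<longrightarrow> u q = 0"
  shows "\<forall>p\<in>R. u p = 0"
proof -
  have "\<forall>p\<in>R. u p \<le> 0" by (rule harmonic_nonpos[OF assms])
  moreover have "\<forall>p\<in>R. - u p \<le> 0"
    by (rule harmonic_nonpos[OF assms(1-3)]) (use assms(4,5) laplacian_uminus in auto)
  ultimately show ?thesis by force
qed

lemma harmonic_zero_boundary_vanishes:
  assumes "d \<ge> 1" "conductivity d n \<gamma>"
    and "\<forall>p\<in>Dom d n. laplacian d n \<gamma> u p = 0" "\<forall>p\<in>Bdry d n. u p = 0"
  shows "\<forall>p\<in>Dom d n. u p = 0"
  using harmonic_vanishes[OF assms(1,2) order_refl assms(3)] assms(4) Nbr_subset_Nodes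
  unfolding Nodes_def by blast

lemma dirichlet_solution_unique:
  assumes "d \<ge> 1" "conductivity d n \<gamma>"
    and u: "dirichlet_solution d n \<gamma> \<phi> u" and v: "dirichlet_solution d n \<gamma> \<phi> v"
  shows "u = v"
proof -
  have "\<forall>p\<in>Dom d n. u p - v p = 0"
    using harmonic_zero_boundary_vanishes[OF assms(1,2), of "\<lambda>q. u q - v q"] u v
    unfolding dirichlet_solution_def laplacian_diff by simp
  then show ?thesis
  proof (intro ext)
    fix p show "u p = v p"
      using u v \<open>\<forall>p\<in>Dom d n. u p - v p = 0\<close> unfolding dirichlet_solution_def Nodes_def
      by (cases "p \<in> Dom d n"; cases "p \<in> Bdry d n") auto
  qed
qed

text \<open>Existence follows from uniqueness: the Dirichlet problem is a square linear system whose
  matrix, the restriction of the symmetric vvec to the interior, is injective.\<close>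
lemma dirichlet_solution_exists:
  assumes "d \<ge> 1" and cond: "conductivity d n \<gamma>"
  shows "\<exists>u. dirichlet_solution d n \<gamma> \<phi> u"
proof -
  let ?D = "Dom d n" and ?N = "Nodes d n" and ?v = "vvec d n \<gamma>"
  have D_N: "?D \<subseteq> ?N" unfolding Nodes_def by blast
  define \<phi>0 where "\<phi>0 = restr (Bdry d n) \<phi>"
  have "\<exists>x. \<forall>p\<in>?D. (\<Sum>q\<in>?D. ?v p q * x q) = - (\<Sum>q\<in>?N. ?v p q * \<phi>0 q)"
  proof (rule symmetric_injective_system_solvable)
    fix x assume x: "\<forall>p\<in>?D. (\<Sum>q\<in>?D. ?v p q * x q) = 0"
    have "\<forall>p\<in>?D. laplacian d n \<gamma> (restr ?D x) p = 0"
      using x D_N laplacian_eq_sum_vvec sum_mult_restr[OF finite_Nodes D_N] by auto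
    then have "\<forall>p\<in>?D. restr ?D x p = 0"
      by (rule harmonic_zero_boundary_vanishes[OF assms])
        (use Dom_Bdry_disjoint in \<open>auto simp: restr_def\<close>)
    then show "\<forall>p\<in>?D. x p = 0" by (simp add: restr_def)
  qed (use finite_Nodes D_N finite_subset vvec_sym[OF cond] in blast)+
  then obtain x where x: "\<forall>p\<in>?D. (\<Sum>q\<in>?D. ?v p q * x q) = - (\<Sum>q\<in>?N. ?v p q * \<phi>0 q)" ..
  define u where "u = (\<lambda>q. \<phi>0 q + restr ?D x q)"
  have "laplacian d n \<gamma> u p = 0" if "p \<in> ?D" for p
  proof -
    have "laplacian d n \<gamma> u p = (\<Sum>q\<in>?N. ?v p q * \<phi>0 q) + (\<Sum>q\<in>?N. ?v p q * restr ?D x q)"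
      using that D_N unfolding u_def by (auto simp: laplacian_eq_sum_vvec algebra_simps sum.distrib)
    then show ?thesis using x that D_N by (simp add: sum_mult_restr finite_Nodes)
  qed
  then have "dirichlet_solution d n \<gamma> \<phi> u"
    using Dom_Bdry_disjoint
    unfolding dirichlet_solution_def u_def \<phi>0_def restr_def Nodes_def by auto
  then show ?thesis by blast
qed

lemma Sgam_solution:
  assumes "d \<ge> 1" "conductivity d n \<gamma>"
  shows "dirichlet_solution d n \<gamma> \<phi> (Sgam d n \<gamma> \<phi>)"
  unfolding Sgam_eq_The_dirichlet_solution
  by (rule theI'[of "dirichlet_solution d n \<gamma> \<phi>"])
    (use dirichlet_solution_exists[OF assms] dirichlet_solution_unique[OF assms] in blast)

lemma Sgam_eqI:
  assumes "d \<ge> 1" "conductivity d n \<gamma>" "dirichlet_solution d n \<gamma> \<phi> u"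
  shows "Sgam d n \<gamma> \<phi> = u"
  unfolding Sgam_eq_The_dirichlet_solution
  by (rule the_equality[of "dirichlet_solution d n \<gamma> \<phi>", OF assms(3)])
    (use dirichlet_solution_unique[OF assms] in blast)

lemma LSt_JSt_subset_Nodes: "LSt d n t \<union> JSt d n t \<subseteq> Nodes d n"
  unfolding LSt_def JSt_def KSminus_def KSplus_def Kminus_def Kplus_def Nodes_def by auto

lemma Dom_in_LSt_JSt_iff: "p \<in> Dom d n \<Longrightarrow> p \<in> LSt d n t \<union> JSt d n t \<longleftrightarrow> ssum d p \<le> t"
  using Dom_Bdry_disjoint LSt_JSt_subset_Nodes
  unfolding LSt_def JSt_def KSminus_def KSplus_def Kminus_def Kplus_def by blast

lemma Bdry_in_LSt_JSt_iff: "p \<in> Bdry d n \<Longrightarrow> p \<in> LSt d n t \<union> JSt d n t \<longleftrightarrow> p \<in> JSt d n t"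
  using Dom_Bdry_disjoint unfolding LSt_def by blast

text \<open>The only nodes of J(t) adjacent to a node above level t are those of the sets K+(l),
  and an interior neighbour of a node of K+(l) lies on level l - 1.\<close>
lemma Nbr_above_notin_LSt_JSt:
  assumes "d \<ge> 1" "p \<in> Dom d n" "t + 1 < ssum d p" "q \<in> Nbr d n p"
  shows "q \<notin> LSt d n t \<union> JSt d n t"
proof
  assume q: "q \<in> LSt d n t \<union> JSt d n t"
  have "t < ssum d q" using ssum_Nbr[OF assms(4)] assms(3) by auto
  then obtain l where "l \<le> t + 1" "q \<in> Kplus d n l"
    using q unfolding LSt_def JSt_def KSminus_def KSplus_def Kminus_def by auto
  then show False using ssum_Dom_Nbr_Kplus[OF assms(1) _ assms(2,4)] assms(3) by force
qed

lemma Sgam_kerT1_vanishes: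
  assumes "d \<ge> 1" "conductivity d n \<gamma>" "\<phi> \<in> kerT1 d n \<gamma> t" "q \<notin> LSt d n t \<union> JSt d n t"
  shows "Sgam d n \<gamma> \<phi> q = 0"
proof -
  define g where "g = Sgam d n \<gamma> \<phi>"
  have sol: "dirichlet_solution d n \<gamma> \<phi> g" unfolding g_def by (rule Sgam_solution[OF assms(1,2)])
  have level: "g x = 0" if "x \<in> Dom d n" "ssum d x = t + 1" for x
    using assms(3) that unfolding kerT1_def Lt_def g_def by blast
  have off_J: "g x = 0" if "x \<notin> Dom d n" "x \<notin> JSt d n t" for x
    using sol assms(3) that unfolding dirichlet_solution_def kerT1_def Nodes_def by auto
  define R where "R = {x \<in> Dom d n. t + 1 < ssum d x}"
  have "\<forall>x\<in>R. g x = 0"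
  proof (rule harmonic_vanishes[OF assms(1,2)])
    show "R \<subseteq> Dom d n" "\<forall>x\<in>R. laplacian d n \<gamma> g x = 0"
      using sol unfolding R_def dirichlet_solution_def by auto
    show "\<forall>x\<in>R. \<forall>y\<in>Nbr d n x. y \<notin> R \<longrightarrow> g y = 0"
    proof (intro ballI impI)
      fix x y assume x: "x \<in> R" and y: "y \<in> Nbr d n x" "y \<notin> R"
      have "ssum d y = t + 1 \<or> y \<notin> Dom d n"
        using ssum_Nbr[OF y(1)] x y(2) unfolding R_def by auto
      moreover have "y \<notin> JSt d n t"
        using Nbr_above_notin_LSt_JSt[OF assms(1) _ _ y(1)] x unfolding R_def by blast
      ultimately show "g y = 0" using level off_J by blast
    qed
  qed
  then show ?thesis
    using level off_J assms(4) Dom_in_LSt_JSt_iff[of q d n t] unfolding R_def g_def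
    by (cases "q \<in> Dom d n") force+
qed

lemma ip_restr_vvec_eq_laplacian:
  assumes "A \<subseteq> Nodes d n" "p \<in> Nodes d n" "\<forall>q. q \<notin> A \<longrightarrow> u q = 0"
  shows "ip A u (restr A (vvec d n \<gamma> p)) = laplacian d n \<gamma> u p"
proof -
  have "ip A u (restr A (vvec d n \<gamma> p)) = (\<Sum>q\<in>A. vvec d n \<gamma> p q * u q)"
    unfolding ip_def restr_def by (simp add: mult.commute)
  also have "\<dots> = (\<Sum>q\<in>Nodes d n. vvec d n \<gamma> p q * u q)"
    using assms finite_Nodes by (intro sum.mono_neutral_left) auto
  finally show ?thesis using laplacian_eq_sum_vvec[OF assms(2)] by simp
qed

lemma Ut_subset_orthogonal_complement:
  fixes t :: int
  assumes "d \<ge> 1" "conductivity d n \<gamma>"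
  defines "A \<equiv> LSt d n t \<union> JSt d n t"
  shows "Ut d n \<gamma> t \<subseteq>
    {f. (\<forall>p. p \<notin> A \<longrightarrow> f p = 0) \<and> (\<forall>p\<in>LSt d n (t + 1). ip A f (restr A (vvec d n \<gamma> p)) = 0)}"
proof
  fix u assume "u \<in> Ut d n \<gamma> t"
  then obtain \<phi> where \<phi>: "\<phi> \<in> kerT1 d n \<gamma> t"
    and u: "u = restr (JSt d n t \<union> LSt d n t) (Sgam d n \<gamma> \<phi>)"
    unfolding Ut_def by blast
  have supp: "\<forall>q. q \<notin> A \<longrightarrow> Sgam d n \<gamma> \<phi> q = 0"
    using Sgam_kerT1_vanishes[OF assms(1,2) \<phi>] unfolding A_def by blast
  then have "u = Sgam d n \<gamma> \<phi>" unfolding u A_def restr_def by (auto simp: fun_eq_iff)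
  moreover have "ip A (Sgam d n \<gamma> \<phi>) (restr A (vvec d n \<gamma> p)) = 0" if "p \<in> LSt d n (t + 1)" for p
  proof -
    have "p \<in> Dom d n" using that unfolding LSt_def by blast
    then have "laplacian d n \<gamma> (Sgam d n \<gamma> \<phi>) p = 0"
      using Sgam_solution[OF assms(1,2)] unfolding dirichlet_solution_def by blast
    moreover have "p \<in> Nodes d n" using \<open>p \<in> Dom d n\<close> unfolding Nodes_def by blast
    ultimately show ?thesis
      using ip_restr_vvec_eq_laplacian[OF LSt_JSt_subset_Nodes[of d n t, folded A_def] _ supp] by simp
  qed
  ultimately show "u \<in> {f. (\<forall>p. p \<notin> A \<longrightarrow> f p = 0) \<and>
      (\<forall>p\<in>LSt d n (t + 1). ip A f (restr A (vvec d n \<gamma> p)) = 0)}"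
    using supp by blast
qed

lemma orthogonal_complement_subset_Ut:
  fixes t :: int
  assumes "d \<ge> 1" "conductivity d n \<gamma>"
  defines "A \<equiv> LSt d n t \<union> JSt d n t"
  shows "{f. (\<forall>p. p \<notin> A \<longrightarrow> f p = 0) \<and> (\<forall>p\<in>LSt d n (t + 1). ip A f (restr A (vvec d n \<gamma> p)) = 0)}
    \<subseteq> Ut d n \<gamma> t"
proof
  fix f assume "f \<in> {f. (\<forall>p. p \<notin> A \<longrightarrow> f p = 0) \<and>
      (\<forall>p\<in>LSt d n (t + 1). ip A f (restr A (vvec d n \<gamma> p)) = 0)}"
  then have supp: "\<forall>p. p \<notin> A \<longrightarrow> f p = 0"
    and orth: "\<forall>p\<in>LSt d n (t + 1). ip A f (restr A (vvec d n \<gamma> p)) = 0" by auto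
  have "laplacian d n \<gamma> f p = 0" if p: "p \<in> Dom d n" for p
  proof (cases "ssum d p \<le> t + 1")
    case True
    then have "ip A f (restr A (vvec d n \<gamma> p)) = 0" using orth p unfolding LSt_def by blast
    moreover have "p \<in> Nodes d n" using p unfolding Nodes_def by blast
    ultimately show ?thesis
      using ip_restr_vvec_eq_laplacian[OF LSt_JSt_subset_Nodes[of d n t, folded A_def] _ supp] by simp
  next
    case False
    then have "f p = 0" using supp Dom_in_LSt_JSt_iff[OF p, of t] unfolding A_def by auto
    moreover have "\<forall>q\<in>Nbr d n p. f q = 0"
      using False supp Nbr_above_notin_LSt_JSt[OF assms(1) p] unfolding A_def by auto
    ultimately show ?thesis unfolding laplacian_def by simp
  qed
  then have "dirichlet_solution d n \<gamma> (restr (JSt d n t) f) f"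
    using supp Bdry_in_LSt_JSt_iff[of _ d n t] LSt_JSt_subset_Nodes[of d n t]
    unfolding dirichlet_solution_def restr_def A_def by auto
  then have Sgam_f: "Sgam d n \<gamma> (restr (JSt d n t) f) = f" by (rule Sgam_eqI[OF assms(1,2)])
  have "\<forall>p\<in>Lt d n (t + 1). f p = 0"
    using supp Dom_in_LSt_JSt_iff[of _ d n t] unfolding A_def Lt_def by force
  then have "restr (JSt d n t) f \<in> kerT1 d n \<gamma> t"
    using Sgam_f unfolding kerT1_def restr_def by simp
  moreover have "restr (JSt d n t \<union> LSt d n t) f = f"
    using supp unfolding A_def restr_def by (auto simp: fun_eq_iff)
  ultimately show "f \<in> Ut d n \<gamma> t" unfolding Ut_def using Sgam_f by (metis image_eqI)
qed

theorem lemma2p4: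
  fixes d n :: nat and \<gamma> :: "pt \<Rightarrow> pt \<Rightarrow> real" and t :: int
  assumes "d \<ge> 2" and "n \<ge> 1" and "conductivity d n \<gamma>"
    and "int d - 1 \<le> t" and "t \<le> int d * int n - 1"
  defines "A \<equiv> LSt d n t \<union> JSt d n t"
  defines "W \<equiv> fspan (LSt d n (t + 1)) (\<lambda>p. restr A (vvec d n \<gamma> p))"
  shows "(\<forall>u\<in>Ut d n \<gamma> t. \<forall>w\<in>W. ip A u w = 0)
    \<and> Ut d n \<gamma> t \<inter> W = {\<lambda>_. 0}
    \<and> {(\<lambda>q. u q + w q) | u w. u \<in> Ut d n \<gamma> t \<and> w \<in> W} = {f. \<forall>p. p \<notin> A \<longrightarrow> f p = 0}"
proof -
  have "d \<ge> 1" using assms(1) by simp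
  have Ut_eq: "Ut d n \<gamma> t = {f. (\<forall>p. p \<notin> A \<longrightarrow> f p = 0)
      \<and> (\<forall>p\<in>LSt d n (t + 1). ip A f (restr A (vvec d n \<gamma> p)) = 0)}"
    unfolding A_def
    by (rule equalityI[OF Ut_subset_orthogonal_complement orthogonal_complement_subset_Ut])
      (fact \<open>d \<ge> 1\<close> assms(3))+
  have "finite A"
    unfolding A_def by (rule finite_subset[OF LSt_JSt_subset_Nodes finite_Nodes])
  moreover have "finite (LSt d n (t + 1))"
    by (rule finite_subset[OF _ finite_Nodes]) (auto simp: LSt_def Nodes_def)
  moreover have "\<forall>p\<in>LSt d n (t + 1). \<forall>q. q \<notin> A \<longrightarrow> restr A (vvec d n \<gamma> p) q = 0"
    by (simp add: restr_def)
  ultimately show ?thesis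
    unfolding W_def Ut_eq by (rule orthogonal_complement_direct_sum)
qed

end
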